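(* Let $p\ge1$, $n,K\in\mathbb{N}$, $\Omega\subseteq\mathbb{R}^d$ compact and $z\in\mathbb{R}^d\setminus\Omega$. Let $f$ be a depth-$K$ MPNN on $G_{\le n}(\Omega)$ whose aggregation functions $\phi^{(k)}$, combine functions $\psi^{(k)}$ and readout are jointly continuous in their inputs and parameters, with parameters ranging over compact sets. For $0\le k\le K$ let $\Omega_k$ be the set of all feature vectors $x_v^{(k)}$ attainable after $k$ message passing layers, over all graphs in $G_{\le n}(\Omega)$, all nodes and all parameter choices, and let $z_k\notin\Omega_k$. Then for each $k$ there exist constants $C\ge c>0$ such that for every $G\in G_{\le n}(\Omega)$, every $v\in V_G$ and every parameter choice, $$C\cdot TD\big(T_v^{(k)},\bar T_z\big)\ \ge\ \|z_k-x_v^{(k)}\|_p\ \ge\ c\cdot TD\big(T_v^{(k)},\bar T_z\big).$$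
   Context: $G_{\le n}(\Omega)$ is the set of graphs $G=(V,E,X)$ with $|V|\le n$ and node features $x_v\in\Omega$; $\mathcal N_v$ is the multiset of neighbors of $v$. An MPNN of depth $K$ computes $x_v^{(0)}=x_v$ and, for $k=1,\dots,K$, $c_v^{(k)}=\phi^{(k)}(\{\!\!\{ x_u^{(k-1)}:u\in\mathcal N_v\}\!\!\})$, $x_v^{(k)}=\psi^{(k)}(x_v^{(k-1)},c_v^{(k)})$, and outputs $\upsilon(\{\!\!\{ x_v^{(K)}:v\in V\}\!\!\})$. Computation trees: $T_v^{(0)}$ is a single root node with feature $x_v$; $T_v^{(k)}$ is obtained from $T_v^{(k-1)}$ by attaching to each leaf (corresponding to a graph node $u$) children corresponding to the neighbors of $u$ in $G$, each carrying its feature from $G$. The blank tree $\bar T_z$ is a single node with feature $z$. For a rooted tree $T$ with root $r$, $\mathcal T_r$ is the multiset of subtrees rooted at the children of $r$. For multisets of trees $A,B$ of size at most $n$, $W^{(\bar T_z)}_{TD,1}(A,B)=\min_{\tau\in S_n}\sum_{j=1}^n TD(A'_j,B'_{\tau(j)})$ where $A',B'$ are $A,B$ padded with copies of $\bar T_z$ to exactly $n$ elements. The tree distance is defined recursively: $TD(T_a,T_b)=\|x_a-x_b\|_p+W^{(\bar T_z)}_{TD,1}(\mathcal T_a,\mathcal T_b)$ if the maximal depth of $T_a,T_b$ is positive, and $TD(T_a,T_b)=\|x_a-x_b\|_p$ otherwise, where $x_a,x_b$ are the root features. *)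

theory Defs
  imports "HOL-Analysis.Analysis" "HOL-Library.Multiset" "HOL-Combinatorics.Permutations"
begin

text \<open>Vectors of R^m are encoded as functions nat => real vanishing from index m on.
  The type nat => real carries the product topology, which on this subspace is the Euclidean one.\<close>

definition Rd :: "nat \<Rightarrow> (nat \<Rightarrow> real) set" where
  "Rd m = {x. \<forall>i\<ge>m. x i = 0}"

definition lp_norm :: "real \<Rightarrow> nat \<Rightarrow> (nat \<Rightarrow> real) \<Rightarrow> real" where
  "lp_norm p m x = (\<Sum>i<m. \<bar>x i\<bar> powr p) powr (1 / p)"

text \<open>Graphs with at most n nodes: vertex set {0..<m}, m <= n, simple undirected edge relation E,
  node features X v in Omega.\<close>

type_synonym graph = "nat \<times> (nat \<Rightarrow> nat \<Rightarrow> bool) \<times> (nat \<Rightarrow> nat \<Rightarrow> real)"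

definition graphs_le :: "nat \<Rightarrow> (nat \<Rightarrow> real) set \<Rightarrow> graph set" where
  "graphs_le n \<Omega> = {(m, E, X). m \<le> n \<and>
      (\<forall>u v. E u v \<longrightarrow> u < m \<and> v < m \<and> u \<noteq> v \<and> E v u) \<and>
      (\<forall>v<m. X v \<in> \<Omega>)}"

definition nbrs :: "nat \<Rightarrow> (nat \<Rightarrow> nat \<Rightarrow> bool) \<Rightarrow> nat \<Rightarrow> nat multiset" where
  "nbrs m E v = mset_set {u. u < m \<and> E v u}"

primrec mpnn_feat ::
  "(nat \<Rightarrow> 'q \<Rightarrow> (nat \<Rightarrow> real) multiset \<Rightarrow> (nat \<Rightarrow> real)) \<Rightarrow>
   (nat \<Rightarrow> 'q \<Rightarrow> (nat \<Rightarrow> real) \<Rightarrow> (nat \<Rightarrow> real) \<Rightarrow> (nat \<Rightarrow> real)) \<Rightarrow>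
   'q \<Rightarrow> graph \<Rightarrow> nat \<Rightarrow> nat \<Rightarrow> (nat \<Rightarrow> real)" where
  "mpnn_feat \<phi> \<psi> \<theta> G 0 v = snd (snd G) v"
| "mpnn_feat \<phi> \<psi> \<theta> G (Suc k) v =
     \<psi> (Suc k) \<theta> (mpnn_feat \<phi> \<psi> \<theta> G k v)
        (\<phi> (Suc k) \<theta> (image_mset (\<lambda>u. mpnn_feat \<phi> \<psi> \<theta> G k u) (nbrs (fst G) (fst (snd G)) v)))"

datatype ftree = FNode (froot: "nat \<Rightarrow> real") (fchildren: "ftree multiset")

primrec fdepth :: "ftree \<Rightarrow> nat" where
  "fdepth (FNode x M) = (if M = {#} then 0 else Suc (Max (set_mset (image_mset fdepth M))))"

definition blank :: "(nat \<Rightarrow> real) \<Rightarrow> ftree" where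
  "blank z = FNode z {#}"

primrec comp_tree :: "graph \<Rightarrow> nat \<Rightarrow> nat \<Rightarrow> ftree" where
  "comp_tree G 0 v = FNode (snd (snd G) v) {#}"
| "comp_tree G (Suc k) v =
     FNode (snd (snd G) v) (image_mset (comp_tree G k) (nbrs (fst G) (fst (snd G)) v))"

definition pad :: "nat \<Rightarrow> (nat \<Rightarrow> real) \<Rightarrow> ftree multiset \<Rightarrow> ftree multiset" where
  "pad n z A = A + replicate_mset (n - size A) (blank z)"

definition W_pad :: "(ftree \<Rightarrow> ftree \<Rightarrow> real) \<Rightarrow> nat \<Rightarrow> (nat \<Rightarrow> real) \<Rightarrow>
    ftree multiset \<Rightarrow> ftree multiset \<Rightarrow> real" where
  "W_pad D n z A B =
     (let as = (SOME as. mset as = pad n z A); bs = (SOME bs. mset bs = pad n z B) in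
      Min {(\<Sum>j<n. D (as ! j) (bs ! (\<tau> j))) | \<tau>. \<tau> permutes {..<n}})"

text \<open>Tree distance. The auxiliary index j equals the maximal depth of the two trees whenever the
  function is entered through TD (the min only makes the recursion visibly terminating).\<close>

fun td_aux :: "real \<Rightarrow> nat \<Rightarrow> (nat \<Rightarrow> real) \<Rightarrow> nat \<Rightarrow> nat \<Rightarrow> ftree \<Rightarrow> ftree \<Rightarrow> real" where
  "td_aux p d z n 0 a b = lp_norm p d (froot a - froot b)"
| "td_aux p d z n (Suc j) a b = lp_norm p d (froot a - froot b) +
     W_pad (\<lambda>s t. td_aux p d z n (min j (max (fdepth s) (fdepth t))) s t) n z
       (fchildren a) (fchildren b)"

definition TD :: "real \<Rightarrow> nat \<Rightarrow> (nat \<Rightarrow> real) \<Rightarrow> nat \<Rightarrow> ftree \<Rightarrow> ftree \<Rightarrow> real" where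
  "TD p d z n a b = td_aux p d z n (max (fdepth a) (fdepth b)) a b"

end

theory Submission
  imports Defs
begin

text \<open>Both sides of the comparison are pinned between positive constants, hence comparable.
  Since z lies outside the compact set \<Omega>, every root distance |x_v - z|_p lies in some [a, M]
  with a > 0. The tree distance TD(T_v^(k), blank z) is at least the root distance, and matching
  every child with a blank tree bounds it by M (n + 1)^k. On the feature side, for each of the
  finitely many graph skeletons on at most n nodes the k-th layer features are a continuous image
  of the compact set \<Theta> \<times> \<Omega>^m; so the attainable features form a compact set avoiding z_k,
  and their distance to z_k is again bounded between positive constants.\<close>

lemma lp_norm_nonneg: "lp_norm p d x \<ge> 0"
  unfolding lp_norm_def by simp

lemma lp_norm_minus_commute: "lp_norm p d (x - y) = lp_norm p d (y - x)"
  unfolding lp_norm_def by (simp add: abs_minus_commute)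

lemma lp_norm_diff_self: "lp_norm p d (x - x) = 0"
  unfolding lp_norm_def by simp

lemma lp_norm_pos:
  assumes "p > 0" "i < d" "x i \<noteq> 0"
  shows "lp_norm p d x > 0"
proof -
  have "0 < \<bar>x i\<bar> powr p" using assms by simp
  also have "\<dots> \<le> (\<Sum>j<d. \<bar>x j\<bar> powr p)"
    using assms by (intro member_le_sum) auto
  finally show ?thesis unfolding lp_norm_def by simp
qed

lemma lp_norm_diff_pos:
  assumes "p > 0" "x \<in> Rd d" "y \<in> Rd d" "x \<noteq> y"
  shows "lp_norm p d (x - y) > 0"
proof -
  obtain i where "x i \<noteq> y i"
    using assms(4) by blast
  moreover have "i < d"
    using assms(2,3) calculation unfolding Rd_def by (cases "i < d") auto
  ultimately show ?thesis
    using lp_norm_pos[OF assms(1)] by simp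
qed

lemma continuous_on_lp_norm_diff:
  assumes "p > 0"
  shows "continuous_on S (\<lambda>x. lp_norm p d (x - y))"
  unfolding lp_norm_def
proof (rule continuous_on_powr')
  have "continuous_on S (\<lambda>x. x i)" for i :: nat
    by (rule continuous_on_product_then_coordinatewise[OF continuous_on_id])
  then show "continuous_on S (\<lambda>x. \<Sum>i<d. \<bar>(x - y) i\<bar> powr p)"
    using assms by (intro continuous_on_sum continuous_on_powr') (auto intro!: continuous_intros)
qed (use assms in \<open>auto intro: sum_nonneg\<close>)

lemma compact_pos_bounds:
  fixes g :: "'a::topological_space \<Rightarrow> real"
  assumes "compact A" "continuous_on A g" "\<And>y. y \<in> A \<Longrightarrow> g y > 0"
  shows "\<exists>a b. 0 < a \<and> a \<le> b \<and> (\<forall>y\<in>A. a \<le> g y \<and> g y \<le> b)"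
proof (cases "A = {}")
  case False
  obtain y0 where y0: "y0 \<in> A" "\<forall>y\<in>A. g y0 \<le> g y"
    using continuous_attains_inf[OF assms(1) False assms(2)] by blast
  obtain y1 where "y1 \<in> A" "\<forall>y\<in>A. g y \<le> g y1"
    using continuous_attains_sup[OF assms(1) False assms(2)] by blast
  with y0 assms(3) show ?thesis by blast
qed (auto intro: exI[of _ 1])

lemma lp_norm_dist_bounds:
  assumes "p > 0" "compact A" "A \<subseteq> Rd d" "w \<in> Rd d" "w \<notin> A"
  shows "\<exists>a b. 0 < a \<and> a \<le> b \<and> (\<forall>y\<in>A. a \<le> lp_norm p d (w - y) \<and> lp_norm p d (w - y) \<le> b)"
  unfolding lp_norm_minus_commute[of p d w]
  using assms by (intro compact_pos_bounds continuous_on_lp_norm_diff lp_norm_diff_pos) auto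

lemma pinched_functions_comparable:
  fixes f g :: "'a \<Rightarrow> real"
  assumes "0 < a" "a \<le> A" "\<forall>x\<in>S. a \<le> f x \<and> f x \<le> A"
    and "0 < b" "b \<le> B" "\<forall>x\<in>S. b \<le> g x \<and> g x \<le> B"
  shows "\<exists>C c. c \<le> C \<and> 0 < c \<and> (\<forall>x\<in>S. g x \<le> C * f x \<and> c * f x \<le> g x)"
proof (intro exI conjI ballI)
  have "b / A \<le> b / a" "b / a \<le> B / a"
    using assms by (auto intro: divide_left_mono divide_right_mono)
  then show "b / A \<le> B / a" by linarith
  show "0 < b / A" using assms by simp
  fix x assume "x \<in> S"
  then have x: "a \<le> f x" "f x \<le> A" "b \<le> g x" "g x \<le> B" using assms by auto
  have "g x \<le> B / a * a" using x assms by simp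
  also have "\<dots> \<le> B / a * f x" using x assms by (intro mult_left_mono) auto
  finally show "g x \<le> B / a * f x" .
  have "b / A * f x \<le> b / A * A" using x assms by (intro mult_left_mono) auto
  also have "\<dots> \<le> g x" using x assms by simp
  finally show "b / A * f x \<le> g x" .
qed

lemma finite_W_pad_candidates:
  "finite {(\<Sum>j<n. D (as ! j) (bs ! (\<tau> j))) | \<tau>. \<tau> permutes {..<n}}"
proof -
  have "{(\<Sum>j<n. D (as ! j) (bs ! (\<tau> j))) | \<tau>. \<tau> permutes {..<n}}
      = (\<lambda>\<tau>. \<Sum>j<n. D (as ! j) (bs ! (\<tau> j))) ` {\<tau>. \<tau> permutes {..<n}}" by auto
  then show ?thesis using finite_permutations[of "{..<n}"] by simp
qed

lemma W_pad_nonneg: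
  assumes "\<And>s t. D s t \<ge> 0"
  shows "W_pad D n z A B \<ge> 0"
proof -
  define as where "as = (SOME as. mset as = pad n z A)"
  define bs where "bs = (SOME bs. mset bs = pad n z B)"
  let ?S = "{(\<Sum>j<n. D (as ! j) (bs ! (\<tau> j))) | \<tau>. \<tau> permutes {..<n}}"
  have "?S \<noteq> {}" using permutes_id[of "{..<n}"] by blast
  then have "Min ?S \<in> ?S" using Min_in[OF finite_W_pad_candidates] by blast
  moreover have "\<forall>x\<in>?S. x \<ge> 0" using assms by (auto intro: sum_nonneg)
  ultimately show ?thesis unfolding W_pad_def Let_def as_def bs_def by blast
qed

text \<open>The identity matching is one admissible permutation, whatever enumerations of the
  padded multisets the choice operator picks.\<close>

lemma W_pad_le:
  assumes "\<And>xs ys. mset xs = pad n z A \<Longrightarrow> mset ys = pad n z B \<Longrightarrow>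
      (\<Sum>j<n. D (xs ! j) (ys ! j)) \<le> c"
  shows "W_pad D n z A B \<le> c"
proof -
  define as where "as = (SOME as. mset as = pad n z A)"
  define bs where "bs = (SOME bs. mset bs = pad n z B)"
  have as: "mset as = pad n z A" and bs: "mset bs = pad n z B"
    unfolding as_def bs_def by (rule someI_ex, rule ex_mset)+
  let ?S = "{(\<Sum>j<n. D (as ! j) (bs ! (\<tau> j))) | \<tau>. \<tau> permutes {..<n}}"
  have "(\<Sum>j<n. D (as ! j) (bs ! (id j))) \<in> ?S" using permutes_id[of "{..<n}"] by blast
  then have "Min ?S \<le> (\<Sum>j<n. D (as ! j) (bs ! j))"
    using Min_le[OF finite_W_pad_candidates] by simp
  also have "\<dots> \<le> c" using assms as bs by blast
  finally show ?thesis unfolding W_pad_def Let_def as_def bs_def by simp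
qed

lemma W_pad_blank_le:
  assumes "\<And>t. t \<in># pad n z A \<Longrightarrow> D t (blank z) \<le> c"
  shows "W_pad D n z A {#} \<le> n * c"
proof (rule W_pad_le)
  fix xs ys assume xs: "mset xs = pad n z A" and ys: "mset ys = pad n z {#}"
  have "D (xs ! j) (ys ! j) \<le> c" if j: "j < n" for j
  proof -
    have "n \<le> length xs" using arg_cong[OF xs, of size] by (simp add: pad_def)
    then have "xs ! j \<in># pad n z A" using j by (simp flip: xs)
    moreover have "length ys = n" using arg_cong[OF ys, of size] by (simp add: pad_def)
    then have "ys ! j \<in># pad n z {#}" using j by (simp flip: ys)
    then have "ys ! j = blank z" by (simp add: pad_def split: if_splits)
    ultimately show ?thesis using assms by simp
  qed
  then have "(\<Sum>j<n. D (xs ! j) (ys ! j)) \<le> (\<Sum>j<n. c)" by (intro sum_mono) simp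
  then show "(\<Sum>j<n. D (xs ! j) (ys ! j)) \<le> n * c" by simp
qed

lemma td_aux_nonneg: "td_aux p d z n j a b \<ge> 0"
proof (induction j arbitrary: a b rule: less_induct)
  case (less j)
  show ?case
  proof (cases j)
    case (Suc j')
    have "W_pad (\<lambda>s t. td_aux p d z n (min j' (max (fdepth s) (fdepth t))) s t) n z
        (fchildren a) (fchildren b) \<ge> 0"
      using Suc by (intro W_pad_nonneg less.IH) auto
    then show ?thesis using Suc by (simp add: lp_norm_nonneg)
  qed (simp add: lp_norm_nonneg)
qed

lemma td_aux_ge_root: "td_aux p d z n j a b \<ge> lp_norm p d (froot a - froot b)"
  by (cases j) (auto intro: W_pad_nonneg td_aux_nonneg)

lemma fdepth_comp_tree: "fdepth (comp_tree G k v) \<le> k"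
  by (induction k arbitrary: v) (auto simp: Max_le_iff)

lemma froot_comp_tree: "froot (comp_tree G k v) = snd (snd G) v"
  by (cases k) auto

definition graph_trees :: "nat \<Rightarrow> (nat \<Rightarrow> real) set \<Rightarrow> (nat \<Rightarrow> real) \<Rightarrow> ftree set" where
  "graph_trees n \<Omega> z =
     insert (blank z) {comp_tree G k v | G k v. G \<in> graphs_le n \<Omega> \<and> v < fst G}"

lemma froot_graph_trees: "T \<in> graph_trees n \<Omega> z \<Longrightarrow> froot T \<in> insert z \<Omega>"
  unfolding graph_trees_def graphs_le_def by (auto simp: froot_comp_tree blank_def)

lemma graph_trees_children:
  assumes "T \<in> graph_trees n \<Omega> z" "t \<in># fchildren T"
  shows "t \<in> graph_trees n \<Omega> z"
proof -
  obtain G k v where G: "G \<in> graphs_le n \<Omega>" "v < fst G" "T = comp_tree G k v"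
    using assms by (auto simp: graph_trees_def blank_def)
  then obtain k' u where "u \<in># nbrs (fst G) (fst (snd G)) v" "t = comp_tree G k' u"
    using assms(2) by (cases k) auto
  moreover from this have "u < fst G" by (simp add: nbrs_def)
  ultimately show ?thesis using G(1) unfolding graph_trees_def by blast
qed

text \<open>Matching every padded child against a blank tree shows that one level of depth
  costs at most a factor n + 1.\<close>

lemma td_aux_blank_le:
  assumes "M \<ge> 0" "\<And>x. x \<in> \<Omega> \<Longrightarrow> lp_norm p d (x - z) \<le> M"
    and "T \<in> graph_trees n \<Omega> z"
  shows "td_aux p d z n j T (blank z) \<le> M * (real n + 1) ^ j"
  using assms(3)
proof (induction j arbitrary: T rule: less_induct)
  case (less j)
  have root: "lp_norm p d (froot T - z) \<le> M"
    using froot_graph_trees[OF less.prems] assms(1,2) by (auto simp: lp_norm_diff_self)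
  show ?case
  proof (cases j)
    case 0
    then show ?thesis using root by (simp add: blank_def)
  next
    case (Suc j')
    let ?D = "\<lambda>s t. td_aux p d z n (min j' (max (fdepth s) (fdepth t))) s t"
    have "?D t (blank z) \<le> M * (real n + 1) ^ j'" if "t \<in># pad n z (fchildren T)" for t
    proof -
      from that have "t \<in># fchildren T \<or> t = blank z" by (auto simp: pad_def split: if_splits)
      then have "t \<in> graph_trees n \<Omega> z"
        using graph_trees_children[OF less.prems] by (auto simp: graph_trees_def)
      then have "?D t (blank z) \<le> M * (real n + 1) ^ min j' (max (fdepth t) (fdepth (blank z)))"
        using Suc by (intro less.IH) auto
      also have "\<dots> \<le> M * (real n + 1) ^ j'"
        using assms(1) by (intro mult_left_mono power_increasing) auto
      finally show ?thesis .
    qed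
    then have "W_pad ?D n z (fchildren T) {#} \<le> n * (M * (real n + 1) ^ j')"
      by (rule W_pad_blank_le)
    moreover have "M \<le> M * (real n + 1) ^ j'"
      using assms(1) by (simp add: mult_le_cancel_left1)
    ultimately show ?thesis
      using root Suc by (simp add: blank_def algebra_simps)
  qed
qed

lemma TD_comp_tree_blank_bounds:
  assumes "p > 0" "compact \<Omega>" "\<Omega> \<subseteq> Rd d" "z \<in> Rd d" "z \<notin> \<Omega>"
  shows "\<exists>a b. 0 < a \<and> a \<le> b \<and> (\<forall>G\<in>graphs_le n \<Omega>. \<forall>v<fst G.
    a \<le> TD p d z n (comp_tree G k v) (blank z) \<and> TD p d z n (comp_tree G k v) (blank z) \<le> b)"
proof -
  obtain a M where a: "0 < a" "a \<le> M" and root: "\<forall>x\<in>\<Omega>. a \<le> lp_norm p d (z - x) \<and> lp_norm p d (z - x) \<le> M"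
    using lp_norm_dist_bounds[OF assms] by blast
  have "a \<le> TD p d z n (comp_tree G k v) (blank z) \<and> TD p d z n (comp_tree G k v) (blank z) \<le> M * (real n + 1) ^ k"
    if "G \<in> graphs_le n \<Omega>" "v < fst G" for G v
  proof
    let ?j = "max (fdepth (comp_tree G k v)) (fdepth (blank z))"
    have x: "snd (snd G) v \<in> \<Omega>" using that unfolding graphs_le_def by auto
    have "a \<le> lp_norm p d (froot (comp_tree G k v) - froot (blank z))"
      using root x by (simp add: froot_comp_tree blank_def lp_norm_minus_commute[of p d _ z])
    also have "\<dots> \<le> TD p d z n (comp_tree G k v) (blank z)"
      unfolding TD_def by (rule td_aux_ge_root)
    finally show "a \<le> TD p d z n (comp_tree G k v) (blank z)" .
    have "comp_tree G k v \<in> graph_trees n \<Omega> z" using that unfolding graph_trees_def by blast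
    then have "TD p d z n (comp_tree G k v) (blank z) \<le> M * (real n + 1) ^ ?j"
      unfolding TD_def using a root by (intro td_aux_blank_le) (auto simp: lp_norm_minus_commute[of p d _ z])
    also have "\<dots> \<le> M * (real n + 1) ^ k"
      using a fdepth_comp_tree[of G k v] by (intro mult_left_mono power_increasing) (auto simp: blank_def)
    finally show "TD p d z n (comp_tree G k v) (blank z) \<le> M * (real n + 1) ^ k" .
  qed
  moreover have "a \<le> M * (real n + 1) ^ k"
    using a order_trans[OF a(2), of "M * (real n + 1) ^ k"] by (simp add: mult_le_cancel_left1)
  ultimately show ?thesis using a(1) by blast
qed

lemma image_mset_conv_nth: "image_mset f (mset L) = image_mset (\<lambda>i. f (L ! i)) (mset [0..<length L])"
proof -
  have "map f L = map (\<lambda>i. f (L ! i)) [0..<length L]" by (rule nth_equalityI) auto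
  then have "mset (map f L) = mset (map (\<lambda>i. f (L ! i)) [0..<length L])" by (rule arg_cong)
  then show ?thesis by (simp only: mset_map)
qed

lemma nbrs_enumeration:
  obtains L where "nbrs m E v = mset L" "length L \<le> m" "\<forall>u\<in>set L. u < m"
proof
  let ?L = "sorted_list_of_set {u. u < m \<and> E v u}"
  show "nbrs m E v = mset ?L"
    unfolding nbrs_def by (metis mset_sorted_list_of_multiset sorted_list_of_mset_set)
  have "card {u. u < m \<and> E v u} \<le> card {..<m}" by (rule card_mono) auto
  then show "length ?L \<le> m" by simp
  show "\<forall>u\<in>set ?L. u < m" by simp
qed

lemma mpnn_feat_cong:
  assumes "\<forall>u<m. X u = X' u" "v < m"
  shows "mpnn_feat \<phi> \<psi> \<theta> (m, E, X) k v = mpnn_feat \<phi> \<psi> \<theta> (m, E, X') k v"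
  using assms(2)
proof (induction k arbitrary: v)
  case (Suc k)
  have "image_mset (\<lambda>u. mpnn_feat \<phi> \<psi> \<theta> (m, E, X) k u) (nbrs m E v) =
        image_mset (\<lambda>u. mpnn_feat \<phi> \<psi> \<theta> (m, E, X') k u) (nbrs m E v)"
    by (rule image_mset_cong) (simp add: Suc.IH nbrs_def)
  then show ?case using Suc by simp
qed (use assms in simp)

definition graph_skeletons :: "nat \<Rightarrow> (nat \<times> (nat \<Rightarrow> nat \<Rightarrow> bool)) set" where
  "graph_skeletons n = {(m, E). m \<le> n \<and> (\<forall>u v. E u v \<longrightarrow> u < m \<and> v < m \<and> u \<noteq> v \<and> E v u)}"

lemma graphs_le_iff:
  "(m, E, X) \<in> graphs_le n \<Omega> \<longleftrightarrow> (m, E) \<in> graph_skeletons n \<and> (\<forall>v<m. X v \<in> \<Omega>)"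
  by (simp add: graphs_le_def graph_skeletons_def)

lemma finite_graph_skeletons: "finite (graph_skeletons n)"
proof (rule finite_subset)
  let ?f = "\<lambda>(m, R). (m, \<lambda>u v. (u, v) \<in> R)"
  show "graph_skeletons n \<subseteq> ?f ` ({..n} \<times> Pow ({..<n} \<times> {..<n}))"
  proof
    fix s assume "s \<in> graph_skeletons n"
    then obtain m E where s: "s = (m, E)" "m \<le> n" "\<forall>u v. E u v \<longrightarrow> u < m \<and> v < m"
      unfolding graph_skeletons_def by blast
    then have "{(u, v). E u v} \<subseteq> {..<n} \<times> {..<n}" by fastforce
    with s show "s \<in> ?f ` ({..n} \<times> Pow ({..<n} \<times> {..<n}))"
      by (intro image_eqI[of _ _ "(m, {(u, v). E u v})"]) auto
  qed
qed simp

text \<open>Node features of a graph on m nodes, extended by zero outside the vertex set so that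
  they range over a compact set.\<close>

definition padded_features :: "nat \<Rightarrow> (nat \<Rightarrow> real) set \<Rightarrow> (nat \<Rightarrow> nat \<Rightarrow> real) set" where
  "padded_features m \<Omega> = {X. \<forall>i. X i \<in> (if i < m then \<Omega> else {\<lambda>_. 0})}"

lemma compact_padded_features:
  assumes "compact \<Omega>"
  shows "compact (padded_features m \<Omega>)"
proof -
  let ?S = "\<lambda>i. if i < m then \<Omega> else {\<lambda>_. 0}"
  have "padded_features m \<Omega> = PiE UNIV ?S"
    by (auto simp: padded_features_def PiE_def Pi_def)
  moreover have "compactin (product_topology (\<lambda>i. euclidean) UNIV) (PiE UNIV ?S)"
    using assms by (simp add: compactin_PiE)
  ultimately show ?thesis
    by (metis compactin_euclidean_iff euclidean_product_topology)
qed

lemma mpnn_features_eq_UN: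
  "{mpnn_feat \<phi> \<psi> \<theta> G k v | \<theta> G v. \<theta> \<in> \<Theta> \<and> G \<in> graphs_le n \<Omega> \<and> v < fst G} =
   (\<Union>(m, E)\<in>graph_skeletons n. \<Union>v<m.
      (\<lambda>x. mpnn_feat \<phi> \<psi> (fst x) (m, E, snd x) k v) ` (\<Theta> \<times> padded_features m \<Omega>))"
  (is "?A = ?B")
proof
  show "?A \<subseteq> ?B"
  proof
    fix y assume "y \<in> ?A"
    then obtain \<theta> m E X v where y: "y = mpnn_feat \<phi> \<psi> \<theta> (m, E, X) k v"
      and G: "\<theta> \<in> \<Theta>" "(m, E) \<in> graph_skeletons n" "\<forall>v<m. X v \<in> \<Omega>" "v < m"
      by (auto simp: graphs_le_iff)
    define X' where "X' i = (if i < m then X i else (\<lambda>_. 0))" for i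
    have "y = mpnn_feat \<phi> \<psi> \<theta> (m, E, X') k v"
      unfolding y X'_def using G(4) by (intro mpnn_feat_cong) auto
    moreover have "X' \<in> padded_features m \<Omega>"
      using G(3) by (simp add: padded_features_def X'_def)
    ultimately show "y \<in> ?B"
      using G by (intro UN_I[of "(m, E)"]) (auto intro!: bexI[of _ v] image_eqI[of _ _ "(\<theta>, X')"])
  qed
  show "?B \<subseteq> ?A"
  proof
    fix y assume "y \<in> ?B"
    then obtain m E v \<theta> X where y: "y = mpnn_feat \<phi> \<psi> \<theta> (m, E, X) k v"
      and G: "(m, E) \<in> graph_skeletons n" "v < m" "\<theta> \<in> \<Theta>" "X \<in> padded_features m \<Omega>"
      by auto
    have "X u \<in> \<Omega>" if "u < m" for u
      using G(4) that unfolding padded_features_def by (auto dest: spec[of _ u])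
    then have "(m, E, X) \<in> graphs_le n \<Omega>"
      using G(1) by (simp add: graphs_le_iff)
    then show "y \<in> ?A" using y G by force
  qed
qed

locale mpnn_layers =
  fixes K n :: nat and dk ek :: "nat \<Rightarrow> nat" and \<Theta> :: "'q::topological_space set"
    and \<phi> :: "nat \<Rightarrow> 'q \<Rightarrow> (nat \<Rightarrow> real) multiset \<Rightarrow> (nat \<Rightarrow> real)"
    and \<psi> :: "nat \<Rightarrow> 'q \<Rightarrow> (nat \<Rightarrow> real) \<Rightarrow> (nat \<Rightarrow> real) \<Rightarrow> (nat \<Rightarrow> real)"
  assumes \<phi>_range: "\<And>k \<theta> M. 1 \<le> k \<Longrightarrow> k \<le> K \<Longrightarrow> \<theta> \<in> \<Theta> \<Longrightarrow>
        set_mset M \<subseteq> Rd (dk (k - 1)) \<Longrightarrow> \<phi> k \<theta> M \<in> Rd (ek k)"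
    and \<phi>_cont: "\<And>k m. 1 \<le> k \<Longrightarrow> k \<le> K \<Longrightarrow> m \<le> n \<Longrightarrow>
        continuous_on (\<Theta> \<times> {X. \<forall>i<m. X i \<in> Rd (dk (k - 1))})
          (\<lambda>(\<theta>, X). \<phi> k \<theta> (image_mset X (mset [0..<m])))"
    and \<psi>_range: "\<And>k \<theta> x c. 1 \<le> k \<Longrightarrow> k \<le> K \<Longrightarrow> \<theta> \<in> \<Theta> \<Longrightarrow>
        x \<in> Rd (dk (k - 1)) \<Longrightarrow> c \<in> Rd (ek k) \<Longrightarrow> \<psi> k \<theta> x c \<in> Rd (dk k)"
    and \<psi>_cont: "\<And>k. 1 \<le> k \<Longrightarrow> k \<le> K \<Longrightarrow>
        continuous_on (\<Theta> \<times> Rd (dk (k - 1)) \<times> Rd (ek k)) (\<lambda>(\<theta>, x, c). \<psi> k \<theta> x c)"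
begin

lemma mpnn_feat_in_Rd:
  assumes "\<theta> \<in> \<Theta>" "\<forall>i<m. X i \<in> Rd (dk 0)" "k \<le> K" "v < m"
  shows "mpnn_feat \<phi> \<psi> \<theta> (m, E, X) k v \<in> Rd (dk k)"
  using assms(3,4)
proof (induction k arbitrary: v)
  case (Suc k)
  have "u < m" if "u \<in># nbrs m E v" for u
    using that by (simp add: nbrs_def)
  then have "set_mset (image_mset (\<lambda>u. mpnn_feat \<phi> \<psi> \<theta> (m, E, X) k u) (nbrs m E v)) \<subseteq> Rd (dk k)"
    using Suc by auto
  then show ?case
    using Suc assms(1) by (simp add: \<psi>_range \<phi>_range)
qed (use assms in simp)

lemma continuous_on_aggregation:
  assumes "1 \<le> k" "k \<le> K" "m \<le> n" "continuous_on S \<theta>" "\<theta> ` S \<subseteq> \<Theta>"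
    and "\<And>i. i < m \<Longrightarrow> continuous_on S (F i)"
    and "\<And>i x. i < m \<Longrightarrow> x \<in> S \<Longrightarrow> F i x \<in> Rd (dk (k - 1))"
  shows "continuous_on S (\<lambda>x. \<phi> k (\<theta> x) (image_mset (\<lambda>i. F i x) (mset [0..<m])))"
proof -
  define Y where "Y x i = (if i < m then F i x else (\<lambda>_. 0))" for x i
  have "continuous_on S Y"
  proof (rule continuous_on_coordinatewise_then_product)
    show "continuous_on S (\<lambda>x. Y x i)" for i
      unfolding Y_def using assms(6) by (cases "i < m") auto
  qed
  then have "continuous_on S (\<lambda>x. (\<lambda>(\<theta>, X). \<phi> k \<theta> (image_mset X (mset [0..<m]))) (\<theta> x, Y x))"
    using assms by (intro continuous_on_compose2[OF \<phi>_cont] continuous_on_Pair) (auto simp: Y_def)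
  moreover have "image_mset (Y x) (mset [0..<m]) = image_mset (\<lambda>i. F i x) (mset [0..<m])" for x
    by (rule image_mset_cong) (simp add: Y_def)
  ultimately show ?thesis by simp
qed

lemma continuous_on_mpnn_feat:
  assumes "m \<le> n" "k \<le> K" "v < m"
  shows "continuous_on (\<Theta> \<times> {X. \<forall>i<m. X i \<in> Rd (dk 0)})
    (\<lambda>x. mpnn_feat \<phi> \<psi> (fst x) (m, E, snd x) k v)"
  using assms(2,3)
proof (induction k arbitrary: v)
  case 0
  have "continuous_on (\<Theta> \<times> {X. \<forall>i<m. X i \<in> Rd (dk 0)}) snd"
    by (rule continuous_on_snd[OF continuous_on_id])
  from continuous_on_product_then_coordinatewise[OF this, of v] show ?case by simp
next
  case (Suc k)
  let ?S = "\<Theta> \<times> {X. \<forall>i<m. X i \<in> Rd (dk 0)}"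
  let ?F = "\<lambda>u x. mpnn_feat \<phi> \<psi> (fst x) (m, E, snd x) k u"
  have F_cont: "continuous_on ?S (?F u)" if "u < m" for u
    using that Suc by simp
  have F_range: "?F u x \<in> Rd (dk k)" if "u < m" "x \<in> ?S" for u x
    using that Suc.prems by (auto intro!: mpnn_feat_in_Rd)
  obtain L where L: "nbrs m E v = mset L" "length L \<le> m" "\<forall>u\<in>set L. u < m"
    by (rule nbrs_enumeration)
  then have L_less: "L ! i < m" if "i < length L" for i
    using that by simp
  let ?\<Phi> = "\<lambda>x. \<phi> (Suc k) (fst x) (image_mset (\<lambda>i. ?F (L ! i) x) (mset [0..<length L]))"
  have "continuous_on ?S ?\<Phi>"
  proof (rule continuous_on_aggregation)
    show "continuous_on ?S fst" by (rule continuous_on_fst[OF continuous_on_id])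
    show "length L \<le> n" using L(2) assms(1) by simp
    show "continuous_on ?S (?F (L ! i))" if "i < length L" for i
      using F_cont[OF L_less[OF that]] .
    show "?F (L ! i) x \<in> Rd (dk (Suc k - 1))" if "i < length L" "x \<in> ?S" for i x
      using F_range[OF L_less[OF that(1)] that(2)] by simp
  qed (use Suc.prems in auto)
  moreover have "?\<Phi> x \<in> Rd (ek (Suc k))" if "x \<in> ?S" for x
    using that Suc.prems F_range[OF L_less] by (intro \<phi>_range) auto
  ultimately have "continuous_on ?S (\<lambda>x. (\<lambda>(\<theta>, y, c). \<psi> (Suc k) \<theta> y c) (fst x, ?F v x, ?\<Phi> x))"
    using Suc.prems F_cont[of v] F_range[of v] by (intro continuous_on_compose2[OF \<psi>_cont] continuous_on_Pair
        continuous_on_fst[OF continuous_on_id]) auto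
  moreover have "mpnn_feat \<phi> \<psi> (fst x) (m, E, snd x) (Suc k) v = \<psi> (Suc k) (fst x) (?F v x) (?\<Phi> x)" for x
    by (simp add: L(1) image_mset_conv_nth[of "\<lambda>u. ?F u x"])
  ultimately show ?case by simp
qed

lemma mpnn_features_subset_Rd:
  assumes "\<Omega> \<subseteq> Rd (dk 0)" "k \<le> K"
  shows "{mpnn_feat \<phi> \<psi> \<theta> G k v | \<theta> G v. \<theta> \<in> \<Theta> \<and> G \<in> graphs_le n \<Omega> \<and> v < fst G} \<subseteq> Rd (dk k)"
proof
  fix y assume "y \<in> {mpnn_feat \<phi> \<psi> \<theta> G k v | \<theta> G v. \<theta> \<in> \<Theta> \<and> G \<in> graphs_le n \<Omega> \<and> v < fst G}"
  then obtain \<theta> m E X v where y: "y = mpnn_feat \<phi> \<psi> \<theta> (m, E, X) k v"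
    and G: "\<theta> \<in> \<Theta>" "(m, E, X) \<in> graphs_le n \<Omega>" "v < m"
    by auto
  have "\<forall>i<m. X i \<in> Rd (dk 0)" using G(2) assms(1) by (auto simp: graphs_le_def)
  then show "y \<in> Rd (dk k)" unfolding y by (rule mpnn_feat_in_Rd[OF G(1) _ assms(2) G(3)])
qed

lemma compact_mpnn_features:
  assumes "compact \<Theta>" "compact \<Omega>" "\<Omega> \<subseteq> Rd (dk 0)" "k \<le> K"
  shows "compact {mpnn_feat \<phi> \<psi> \<theta> G k v | \<theta> G v. \<theta> \<in> \<Theta> \<and> G \<in> graphs_le n \<Omega> \<and> v < fst G}"
proof -
  have "compact ((\<lambda>x. mpnn_feat \<phi> \<psi> (fst x) (m, E, snd x) k v) ` (\<Theta> \<times> padded_features m \<Omega>))"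
    if "(m, E) \<in> graph_skeletons n" "v < m" for m E v
  proof (rule compact_continuous_image)
    have "continuous_on (\<Theta> \<times> {X. \<forall>i<m. X i \<in> Rd (dk 0)})
        (\<lambda>x. mpnn_feat \<phi> \<psi> (fst x) (m, E, snd x) k v)"
      using that assms(4) by (intro continuous_on_mpnn_feat) (auto simp: graph_skeletons_def)
    moreover have "\<Theta> \<times> padded_features m \<Omega> \<subseteq> \<Theta> \<times> {X. \<forall>i<m. X i \<in> Rd (dk 0)}"
      using assms(3) by (auto simp: padded_features_def)
    ultimately show "continuous_on (\<Theta> \<times> padded_features m \<Omega>)
        (\<lambda>x. mpnn_feat \<phi> \<psi> (fst x) (m, E, snd x) k v)"
      by (rule continuous_on_subset)
    show "compact (\<Theta> \<times> padded_features m \<Omega>)"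
      using assms(1,2) by (intro compact_Times compact_padded_features)
  qed
  then show ?thesis
    unfolding mpnn_features_eq_UN by (intro compact_UN finite_graph_skeletons) auto
qed

end


theorem mainTheorem11:
  fixes p :: real and n K d :: nat
    and \<Omega> :: "(nat \<Rightarrow> real) set" and z :: "nat \<Rightarrow> real"
    and dk ek :: "nat \<Rightarrow> nat"
    and \<Theta> :: "'q::euclidean_space set"
    and \<phi> :: "nat \<Rightarrow> 'q \<Rightarrow> (nat \<Rightarrow> real) multiset \<Rightarrow> (nat \<Rightarrow> real)"
    and \<psi> :: "nat \<Rightarrow> 'q \<Rightarrow> (nat \<Rightarrow> real) \<Rightarrow> (nat \<Rightarrow> real) \<Rightarrow> (nat \<Rightarrow> real)"
    and zk :: "nat \<Rightarrow> (nat \<Rightarrow> real)"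
  assumes p: "p \<ge> 1"
    and \<Omega>: "compact \<Omega>" "\<Omega> \<subseteq> Rd d"
    and z: "z \<in> Rd d" "z \<notin> \<Omega>"
    and d0: "dk 0 = d"
    and \<Theta>: "compact \<Theta>"
    and \<phi>_range: "\<And>k \<theta> M. 1 \<le> k \<Longrightarrow> k \<le> K \<Longrightarrow> \<theta> \<in> \<Theta> \<Longrightarrow>
        set_mset M \<subseteq> Rd (dk (k - 1)) \<Longrightarrow> \<phi> k \<theta> M \<in> Rd (ek k)"
    and \<phi>_cont: "\<And>k m. 1 \<le> k \<Longrightarrow> k \<le> K \<Longrightarrow> m \<le> n \<Longrightarrow>
        continuous_on (\<Theta> \<times> {X. \<forall>i<m. X i \<in> Rd (dk (k - 1))})
          (\<lambda>(\<theta>, X). \<phi> k \<theta> (image_mset X (mset [0..<m])))"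
    and \<psi>_range: "\<And>k \<theta> x c. 1 \<le> k \<Longrightarrow> k \<le> K \<Longrightarrow> \<theta> \<in> \<Theta> \<Longrightarrow>
        x \<in> Rd (dk (k - 1)) \<Longrightarrow> c \<in> Rd (ek k) \<Longrightarrow> \<psi> k \<theta> x c \<in> Rd (dk k)"
    and \<psi>_cont: "\<And>k. 1 \<le> k \<Longrightarrow> k \<le> K \<Longrightarrow>
        continuous_on (\<Theta> \<times> Rd (dk (k - 1)) \<times> Rd (ek k)) (\<lambda>(\<theta>, x, c). \<psi> k \<theta> x c)"
    and zk: "\<And>k. k \<le> K \<Longrightarrow> zk k \<in> Rd (dk k)"
    and zk_notin: "\<And>k. k \<le> K \<Longrightarrow> zk k \<notin>
        {mpnn_feat \<phi> \<psi> \<theta> G k v | \<theta> G v. \<theta> \<in> \<Theta> \<and> G \<in> graphs_le n \<Omega> \<and> v < fst G}"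
  shows "\<forall>k\<le>K. \<exists>C c. C \<ge> c \<and> c > 0 \<and>
     (\<forall>\<theta>\<in>\<Theta>. \<forall>G\<in>graphs_le n \<Omega>. \<forall>v<fst G.
        C * TD p d z n (comp_tree G k v) (blank z) \<ge> lp_norm p (dk k) (zk k - mpnn_feat \<phi> \<psi> \<theta> G k v) \<and>
        lp_norm p (dk k) (zk k - mpnn_feat \<phi> \<psi> \<theta> G k v) \<ge> c * TD p d z n (comp_tree G k v) (blank z))"
proof (intro allI impI)
  fix k assume k: "k \<le> K"
  interpret mpnn_layers K n dk ek \<Theta> \<phi> \<psi>
    using \<phi>_range \<phi>_cont \<psi>_range \<psi>_cont by unfold_locales
  have p0: "p > 0" using p by simp
  obtain a A where TD_bounds: "0 < a" "a \<le> A" "\<forall>G\<in>graphs_le n \<Omega>. \<forall>v<fst G.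
      a \<le> TD p d z n (comp_tree G k v) (blank z) \<and> TD p d z n (comp_tree G k v) (blank z) \<le> A"
    using TD_comp_tree_blank_bounds[OF p0 \<Omega> z] by blast
  let ?F = "{mpnn_feat \<phi> \<psi> \<theta> G k v | \<theta> G v. \<theta> \<in> \<Theta> \<and> G \<in> graphs_le n \<Omega> \<and> v < fst G}"
  obtain b B where feat_bounds: "0 < b" "b \<le> B"
    "\<forall>y\<in>?F. b \<le> lp_norm p (dk k) (zk k - y) \<and> lp_norm p (dk k) (zk k - y) \<le> B"
    using lp_norm_dist_bounds[OF p0 compact_mpnn_features mpnn_features_subset_Rd zk[OF k] zk_notin[OF k]]
      \<Theta> \<Omega> k d0 by blast
  let ?S = "{(\<theta>, G, v). \<theta> \<in> \<Theta> \<and> G \<in> graphs_le n \<Omega> \<and> v < fst G}"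
  let ?f = "\<lambda>(\<theta>, G, v). TD p d z n (comp_tree G k v) (blank z)"
  let ?g = "\<lambda>(\<theta>, G, v). lp_norm p (dk k) (zk k - mpnn_feat \<phi> \<psi> \<theta> G k v)"
  have "\<exists>C c. c \<le> C \<and> 0 < c \<and> (\<forall>x\<in>?S. ?g x \<le> C * ?f x \<and> c * ?f x \<le> ?g x)"
    using TD_bounds feat_bounds by (intro pinched_functions_comparable[of a A _ _ b B]) fastforce+
  then show "\<exists>C c. C \<ge> c \<and> c > 0 \<and> (\<forall>\<theta>\<in>\<Theta>. \<forall>G\<in>graphs_le n \<Omega>. \<forall>v<fst G.
      C * TD p d z n (comp_tree G k v) (blank z) \<ge> lp_norm p (dk k) (zk k - mpnn_feat \<phi> \<psi> \<theta> G k v) \<and>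
      lp_norm p (dk k) (zk k - mpnn_feat \<phi> \<psi> \<theta> G k v) \<ge> c * TD p d z n (comp_tree G k v) (blank z))"
    by fastforce
qed

end
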